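(* Let $L\in\mathcal{G}(\Sigma_0,T_0)$ be a deterministic guarded language and let $(\mathfrak{s},\mathfrak{t})$ be a guarded language morphism with $\mathfrak{s}:\Sigma_0\to\mathcal{G}(\Sigma_1,T_1)$ and $\mathfrak{t}:T_0\to\mathsf{BA}(T_1)$. If $\mathfrak{s}(p)$ is deterministic for every $p\in\Sigma_0$, then $\mathrm{apply}^{\mathfrak{s}}_{\mathfrak{t}}(L)$ is deterministic.
   Context: For finite $T$, $\Sigma$: $\mathsf{BA}(T)$ are Boolean expressions over $T$; atoms $\mathsf{At}_T=2^T$; $\alpha\le b$ means $b$ holds under the assignment making exactly the tests in $\alpha$ true. Guarded strings: words in $\mathsf{At}_T(\Sigma\mathsf{At}_T)^*$; $\mathcal{G}(\Sigma,T)$ is the set of guarded languages regular over the alphabet $\mathsf{At}_T\cup\Sigma$. A guarded language is deterministic if for all distinct $w,w'$ in it, $w$ is not a proper prefix of $w'$ and the first position where $w,w'$ differ is an atom. $w'\alpha\diamond\alpha x'=w'\alpha x'$. A guarded language morphism is a pair $(\mathfrak{s},\mathfrak{t})$ with $\mathfrak{s}:\Sigma_0\to\mathcal{G}(\Sigma_1,T_1)$ and $\mathfrak{t}:T_0\to\mathsf{BA}(T_1)$. $\beta\in\mathsf{At}_{T_1}$ is $\mathfrak{t}$-consistent with $\alpha\in\mathsf{At}_{T_0}$ if for all $t\in T_0$, $\alpha\le t$ iff $\beta\le\mathfrak{t}(t)$. $\mathrm{apply}_{\mathfrak{t}}(L)$ = set of $\beta_0p_0\beta_1\cdots p_{n-1}\beta_n$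 such that some $\alpha_0p_0\cdots p_{n-1}\alpha_n\in L$ has each $\beta_i$ $\mathfrak{t}$-consistent with $\alpha_i$. For $L$ over $(\Sigma_0,T_1)$, $\mathrm{apply}^{\mathfrak{s}}(L)$ = set of $\alpha_0\diamond w_0\diamond\alpha_1\diamond\cdots\diamond w_{n-1}\diamond\alpha_n$ with $\alpha_0p_0\cdots p_{n-1}\alpha_n\in L$, $w_i\in\mathfrak{s}(p_i)$. $\mathrm{apply}^{\mathfrak{s}}_{\mathfrak{t}}=\mathrm{apply}^{\mathfrak{s}}\circ\mathrm{apply}_{\mathfrak{t}}$. *)

theory Defs
  imports Main "HOL-Library.Sublist"
begin

text \<open>Letters of guarded strings over actions 's and tests 't:
  an atom (a subset of the finite test set, i.e. an element of 2^T) or an action.\<close>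
type_synonym ('s, 't) letter = "'t set + 's"
type_synonym ('s, 't) gword = "('s, 't) letter list"

inductive_set regular :: "'a list set set" where
  reg_empty: "{} \<in> regular"
| reg_eps: "{[]} \<in> regular"
| reg_sym: "{[a]} \<in> regular"
| reg_union: "A \<in> regular \<Longrightarrow> B \<in> regular \<Longrightarrow> A \<union> B \<in> regular"
| reg_conc: "A \<in> regular \<Longrightarrow> B \<in> regular \<Longrightarrow> {u @ v | u v. u \<in> A \<and> v \<in> B} \<in> regular"
| reg_star: "A \<in> regular \<Longrightarrow> {concat us | us. set us \<subseteq> A} \<in> regular"

fun guarded :: "('s, 't) gword \<Rightarrow> bool" where
  "guarded [Inl a] = True"
| "guarded (Inl a # Inr p # rest) = guarded rest"
| "guarded _ = False"

definition GL :: "('s, 't) gword set set" where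
  "GL = {L. (\<forall>w\<in>L. guarded w) \<and> L \<in> regular}"

definition deterministic :: "('s, 't) gword set \<Rightarrow> bool" where
  "deterministic L \<longleftrightarrow> (\<forall>w\<in>L. \<forall>w'\<in>L. w \<noteq> w' \<longrightarrow>
      \<not> strict_prefix w w' \<and>
      (\<exists>i. i < length w \<and> i < length w' \<and> take i w = take i w' \<and> w ! i \<noteq> w' ! i
           \<and> isl (w ! i) \<and> isl (w' ! i)))"

datatype 't bexp = BTrue | BFalse | BTest 't | BNot "'t bexp"
  | BAnd "'t bexp" "'t bexp" | BOr "'t bexp" "'t bexp"

fun sat :: "'t set \<Rightarrow> 't bexp \<Rightarrow> bool" where
  "sat \<alpha> BTrue = True"
| "sat \<alpha> BFalse = False"
| "sat \<alpha> (BTest t) = (t \<in> \<alpha>)"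
| "sat \<alpha> (BNot b) = (\<not> sat \<alpha> b)"
| "sat \<alpha> (BAnd b c) = (sat \<alpha> b \<and> sat \<alpha> c)"
| "sat \<alpha> (BOr b c) = (sat \<alpha> b \<or> sat \<alpha> c)"

definition t_consistent :: "('t0 \<Rightarrow> 't1 bexp) \<Rightarrow> 't1 set \<Rightarrow> 't0 set \<Rightarrow> bool" where
  "t_consistent tm \<beta> \<alpha> \<longleftrightarrow> (\<forall>t. sat \<alpha> (BTest t) \<longleftrightarrow> sat \<beta> (tm t))"

fun letter_rel :: "('t0 \<Rightarrow> 't1 bexp) \<Rightarrow> ('s, 't0) letter \<Rightarrow> ('s, 't1) letter \<Rightarrow> bool" where
  "letter_rel tm (Inl \<alpha>) (Inl \<beta>) = t_consistent tm \<beta> \<alpha>"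
| "letter_rel tm (Inr p) (Inr q) = (p = q)"
| "letter_rel tm _ _ = False"

definition apply_t :: "('t0 \<Rightarrow> 't1 bexp) \<Rightarrow> ('s, 't0) gword set \<Rightarrow> ('s, 't1) gword set" where
  "apply_t tm L = {w'. \<exists>w\<in>L. list_all2 (letter_rel tm) w w'}"

text \<open>All strings alpha_0 <> w_0 <> alpha_1 <> ... <> alpha_n obtainable from one guarded string,
  where u alpha <> alpha v = u alpha v (defined only when the atoms match).\<close>
fun expand :: "('s0 \<Rightarrow> ('s1, 't) gword set) \<Rightarrow> ('s0, 't) gword \<Rightarrow> ('s1, 't) gword set" where
  "expand sm [Inl a] = {[Inl a]}"
| "expand sm (Inl a # Inr p # rest) =
     {w @ tl v | w v. w \<in> sm p \<and> w \<noteq> [] \<and> hd w = Inl a \<and>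
                      v \<in> expand sm rest \<and> v \<noteq> [] \<and> last w = hd v}"
| "expand sm _ = {}"

definition apply_s :: "('s0 \<Rightarrow> ('s1, 't) gword set) \<Rightarrow> ('s0, 't) gword set \<Rightarrow> ('s1, 't) gword set" where
  "apply_s sm L = (\<Union>w\<in>L. expand sm w)"

definition apply_st :: "('s0 \<Rightarrow> ('s1, 't1) gword set) \<Rightarrow> ('t0 \<Rightarrow> 't1 bexp)
    \<Rightarrow> ('s0, 't0) gword set \<Rightarrow> ('s1, 't1) gword set" where
  "apply_st sm tm L = apply_s sm (apply_t tm L)"

end

theory Submission
  imports Defs
begin

text \<open>Determinism says that two distinct words of the language first differ at an atom. Replacing
  every atom by a \<open>tm\<close>-consistent one keeps this property, since an atom over \<open>T\<^sub>1\<close> is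
  consistent with at most one atom over \<open>T\<^sub>0\<close> and actions are left unchanged. Expanding
  actions by \<open>sm\<close> keeps it as well: two expansions agree up to the image of the first difference
  of the underlying words, which is an atom and copied verbatim, or up to the first difference of
  two words of the same \<open>sm p\<close>, which is an atom because \<open>sm p\<close> is deterministic.\<close>

fun diverge_at_atom :: "('a + 'b) list \<Rightarrow> ('a + 'b) list \<Rightarrow> bool" where
  "diverge_at_atom (a # x) (b # y) = (if a = b then diverge_at_atom x y else isl a \<and> isl b)"
| "diverge_at_atom _ _ = False"

lemma diverge_at_atom_iff_nth:
  "diverge_at_atom x y \<longleftrightarrow> (\<exists>i. i < length x \<and> i < length y \<and> take i x = take i y
     \<and> x ! i \<noteq> y ! i \<and> isl (x ! i) \<and> isl (y ! i))"
  by (induction x y rule: diverge_at_atom.induct) (auto simp: Ex_less_Suc2)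

lemma not_diverge_at_atom_append: "\<not> diverge_at_atom x (x @ z)"
  by (induction x) auto

lemma diverge_at_atom_append_same [simp]:
  "diverge_at_atom (w @ x) (w @ y) \<longleftrightarrow> diverge_at_atom x y"
  by (induction w) auto

lemma diverge_at_atom_append:
  "diverge_at_atom w w' \<Longrightarrow> diverge_at_atom (w @ x) (w' @ y)"
  by (induction w w' rule: diverge_at_atom.induct) auto

lemma deterministic_iff_diverge_at_atom:
  "deterministic L \<longleftrightarrow> (\<forall>w\<in>L. \<forall>w'\<in>L. w = w' \<or> diverge_at_atom w w')"
  unfolding deterministic_def diverge_at_atom_iff_nth[symmetric]
  by (metis not_diverge_at_atom_append prefix_def strict_prefix_def)

lemma t_consistent_unique:
  "t_consistent tm \<beta> \<alpha> \<Longrightarrow> t_consistent tm \<beta> \<alpha>' \<Longrightarrow> \<alpha> = \<alpha>'"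
  unfolding t_consistent_def by auto

lemma letter_rel_left_unique:
  "letter_rel tm a b \<Longrightarrow> letter_rel tm a' b \<Longrightarrow> a = a'"
  by (cases a; cases a'; cases b) (auto dest: t_consistent_unique)

lemma letter_rel_isl: "letter_rel tm a b \<Longrightarrow> isl b = isl a"
  by (cases a; cases b) auto

lemma letter_rel_Inr [simp]: "letter_rel tm (Inr p) b \<longleftrightarrow> b = Inr p"
  by (cases b) auto

lemma list_all2_letter_rel_diverge_at_atom:
  assumes "list_all2 (letter_rel tm) u w" and "list_all2 (letter_rel tm) u' w'"
    and "u = u' \<or> diverge_at_atom u u'"
  shows "w = w' \<or> diverge_at_atom w w'"
  using assms
proof (induction u w arbitrary: u' w' rule: list_all2_induct)
  case Nil
  then show ?case by auto
next
  case (Cons a us b ws)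
  from Cons.prems obtain a' b' us' ws' where u': "u' = a' # us'" and w': "w' = b' # ws'"
    and rel': "letter_rel tm a' b'" "list_all2 (letter_rel tm) us' ws'"
    by (cases u') (auto simp: list_all2_Cons1)
  show ?case
  proof (cases "b = b'")
    case True
    with rel'(1) have "a = a'" using Cons.hyps(1) by (auto intro: letter_rel_left_unique)
    with Cons.prems(2) u' have "us = us' \<or> diverge_at_atom us us'" by auto
    with Cons.IH rel'(2) have "ws = ws' \<or> diverge_at_atom ws ws'" by blast
    with True w' show ?thesis by simp
  next
    case False
    have "isl a \<and> isl a'"
    proof (cases "a = a'")
      case True
      have "isl a"
      proof (rule ccontr)
        assume "\<not> isl a"
        then obtain p where "a = Inr p" by (cases a) auto
        with True[symmetric] Cons.hyps(1) rel'(1) have "b = b'" by simp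
        with \<open>b \<noteq> b'\<close> show False ..
      qed
      with True show ?thesis by simp
    next
      case False
      with Cons.prems(2) u' show ?thesis by auto
    qed
    with False w' Cons.hyps(1) rel'(1) show ?thesis by (simp add: letter_rel_isl)
  qed
qed

lemma deterministic_apply_t:
  assumes "deterministic L"
  shows "deterministic (apply_t tm L)"
  unfolding deterministic_iff_diverge_at_atom
proof (intro ballI)
  fix w w' assume "w \<in> apply_t tm L" and "w' \<in> apply_t tm L"
  then obtain u u' where "u \<in> L" "u' \<in> L"
    and rel: "list_all2 (letter_rel tm) u w" "list_all2 (letter_rel tm) u' w'"
    unfolding apply_t_def by blast
  from assms \<open>u \<in> L\<close> \<open>u' \<in> L\<close> have "u = u' \<or> diverge_at_atom u u'"
    unfolding deterministic_iff_diverge_at_atom by blast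
  with rel show "w = w' \<or> diverge_at_atom w w'"
    by (rule list_all2_letter_rel_diverge_at_atom)
qed

lemma expand_ConsE:
  assumes "x \<in> expand sm u"
  obtains a us xs where "u = Inl a # us" and "x = Inl a # xs"
  using assms by (cases "(sm, u)" rule: expand.cases) (auto simp: neq_Nil_conv)

lemma expand_diverge_at_atom:
  assumes "u = u' \<or> diverge_at_atom u u'"
    and "x \<in> expand sm u" and "x' \<in> expand sm u'"
    and "\<And>p. deterministic (sm p)"
  shows "x = x' \<or> diverge_at_atom x x'"
  using assms
proof (induction sm u arbitrary: u' x x' rule: expand.induct)
  case (1 sm a)
  obtain a' us' xs' where u': "u' = Inl a' # us'" and x': "x' = Inl a' # xs'"
    using "1.prems"(3) by (rule expand_ConsE)
  show ?case
  proof (cases "a = a'")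
    case True
    with "1.prems" u' have "u' = [Inl a]" by auto
    with "1.prems" show ?thesis by simp
  next
    case False
    with "1.prems"(2) x' show ?thesis by simp
  qed
next
  case (2 sm a p rest)
  obtain w v where x: "x = w @ tl v" and w: "w \<in> sm p"
    and v: "v \<in> expand sm rest" "v \<noteq> []" "last w = hd v"
    using "2.prems"(2) by auto
  obtain a' us' xs' where u': "u' = Inl a' # us'" and x'_Cons: "x' = Inl a' # xs'"
    using "2.prems"(3) by (rule expand_ConsE)
  obtain xs where "x = Inl a # xs"
    using "2.prems"(2) by (rule expand_ConsE) auto
  show ?case
  proof (cases "a = a'")
    case False
    with \<open>x = Inl a # xs\<close> x'_Cons show ?thesis by simp
  next
    case True
    with "2.prems"(1) u' have "Inr p # rest = us' \<or> diverge_at_atom (Inr p # rest) us'"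
      by auto
    then obtain r' where "us' = Inr p # r'" and rest: "rest = r' \<or> diverge_at_atom rest r'"
      by (cases us') (auto split: if_splits)
    with "2.prems"(3) u' True obtain w' v' where x': "x' = w' @ tl v'" and w': "w' \<in> sm p"
      and v': "v' \<in> expand sm r'" "v' \<noteq> []" "last w' = hd v'"
      by auto
    show ?thesis
    proof (cases "w = w'")
      case True
      from "2.IH"[OF rest v(1) v'(1) "2.prems"(4)] have "v = v' \<or> diverge_at_atom v v'" .
      with v(2,3) v'(2,3) True have "tl v = tl v' \<or> diverge_at_atom (tl v) (tl v')"
        by (cases v; cases v') auto
      with True x x' show ?thesis by auto
    next
      case False
      with "2.prems"(4)[of p] w w' have "diverge_at_atom w w'"
        unfolding deterministic_iff_diverge_at_atom by blast
      with x x' show ?thesis by (simp add: diverge_at_atom_append)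
    qed
  qed
qed auto

lemma deterministic_apply_s:
  assumes "deterministic L" and "\<And>p. deterministic (sm p)"
  shows "deterministic (apply_s sm L)"
  unfolding deterministic_iff_diverge_at_atom
proof (intro ballI)
  fix x x' assume "x \<in> apply_s sm L" and "x' \<in> apply_s sm L"
  then obtain u u' where "u \<in> L" "u' \<in> L"
    and expands: "x \<in> expand sm u" "x' \<in> expand sm u'"
    unfolding apply_s_def by blast
  from assms(1) \<open>u \<in> L\<close> \<open>u' \<in> L\<close> have "u = u' \<or> diverge_at_atom u u'"
    unfolding deterministic_iff_diverge_at_atom by blast
  from this expands assms(2) show "x = x' \<or> diverge_at_atom x x'"
    by (rule expand_diverge_at_atom)
qed

theorem proposition5p4:
  fixes L :: "('s0::finite, 't0::finite) gword set"
    and sm :: "'s0 \<Rightarrow> ('s1::finite, 't1::finite) gword set"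
    and tm :: "'t0 \<Rightarrow> 't1 bexp"
  assumes "L \<in> GL" and "deterministic L"
    and "\<And>p. sm p \<in> GL"
    and "\<And>p. deterministic (sm p)"
  shows "deterministic (apply_st sm tm L)"
  unfolding apply_st_def
  using deterministic_apply_s[OF deterministic_apply_t[OF assms(2)] assms(4)] .

end
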